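(* Let $\mathcal{U}=[k]$ be finite, let $\{\mathbf{p}_u\}_{u\in\mathcal{U}}$ be a probability table with every $\mathbf{p}_u\in(0,1)^n$ and $\sum_ip_u^{(i)}=1$, and let $d$ be a probability distribution on $\mathcal{U}$. Then the vector $(f_d(C^{(i)},C^{(j)}))_{i<j}\in\mathbb{R}^{n(n-1)/2}$ lies in $\mathrm{Co}(\mathcal{H_R})$, the interior of the convex hull of the ranking vectors.
   Context: $f_d(C^{(i)},C^{(j)})=\sum_u d(u)\,p_u^{(i)}/(p_u^{(i)}+p_u^{(j)})$ are the expert graph weights. For a permutation $r=(r_1,\dots,r_n)$ of $[n]$, the ranking vector has coordinates $f_r(C^{(i)},C^{(j)})$, $i<j$, where $f_r(C^{(r_a)},C^{(r_b)})=1$ if $a<b$ and $0$ if $a>b$. $\mathrm{Co}(\mathcal{H_R})$ is the open convex hull (interior of the convex hull, the linear ordering polytope) of the $n!$ ranking vectors in $\mathbb{R}^{n(n-1)/2}$. *)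

theory Defs
  imports "HOL-Analysis.Analysis"
begin

text \<open>Items (experts/candidates) C^(1..n) are indexed by a finite linearly ordered type 'n
  (so [n] is order-isomorphic to 'n, n = CARD('n)).
  The space R^(n(n-1)/2) with coordinates (i,j), i<j, is realised as the coordinate
  subspace pair_coords of real^('n \<times> 'n) in which all coordinates (i,j) with
  not i<j vanish; it carries the subspace topology.\<close>

definition f_d :: "(nat \<Rightarrow> real) \<Rightarrow> (nat \<Rightarrow> 'n \<Rightarrow> real) \<Rightarrow> nat \<Rightarrow> 'n \<Rightarrow> 'n \<Rightarrow> real" where
  "f_d d p k i j = (\<Sum>u=1..k. d u * p u i / (p u i + p u j))"

definition pair_coords :: "(real ^ ('n::{finite,linorder} \<times> 'n)) set" where
  "pair_coords = {x. \<forall>i j. \<not> i < j \<longrightarrow> x $ (i, j) = 0}"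

text \<open>r maps positions to items (r a = r_a); f_r(C^(r_a),C^(r_b)) = 1 iff a < b.\<close>
definition ranking_vector :: "('n::{finite,linorder} \<Rightarrow> 'n) \<Rightarrow> real ^ ('n \<times> 'n)" where
  "ranking_vector r = (\<chi> ij. case ij of (i, j) \<Rightarrow>
      if i < j then (if inv r i < inv r j then 1 else 0) else 0)"

definition ranking_vectors :: "(real ^ ('n::{finite,linorder} \<times> 'n)) set" where
  "ranking_vectors = {ranking_vector r | r. bij r}"

definition Co_HR :: "(real ^ ('n::{finite,linorder} \<times> 'n)) set" where
  "Co_HR = (top_of_set pair_coords) interior_of (convex hull ranking_vectors)"

definition expert_vector :: "(nat \<Rightarrow> real) \<Rightarrow> (nat \<Rightarrow> 'n::{finite,linorder} \<Rightarrow> real) \<Rightarrow> nat \<Rightarrow> real ^ ('n \<times> 'n)" where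
  "expert_vector d p k = (\<chi> ij. case ij of (i, j) \<Rightarrow> if i < j then f_d d p k i j else 0)"

end

theory Submission
  imports Defs "HOL-Combinatorics.Multiset_Permutations"
begin

text \<open>Rank the items by the Plackett-Luce procedure: repeatedly draw one of the remaining items
  with probability proportional to its weight \<open>p\<^sub>u\<close>. Then item \<open>i\<close> ends up before
  item \<open>j\<close> with probability \<open>p\<^sub>u i / (p\<^sub>u i + p\<^sub>u j)\<close>, so the expert vector is a convex
  combination of ranking vectors in which every ranking has strictly positive weight, and hence
  lies in the relative interior of their convex hull. Exchanging the two top-ranked items changes
  exactly one coordinate of a ranking vector, so the hull spans the whole coordinate space and its
  relative interior is its interior there.\<close>

fun plackett_luce :: "('a \<Rightarrow> real) \<Rightarrow> 'a list \<Rightarrow> real" where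
  "plackett_luce p [] = 1"
| "plackett_luce p (x # xs) = p x / (p x + sum_list (map p xs)) * plackett_luce p xs"

fun index :: "'a list \<Rightarrow> 'a \<Rightarrow> nat" where
  "index [] y = 0"
| "index (x # xs) y = (if x = y then 0 else Suc (index xs y))"

lemma nth_index: "x \<in> set xs \<Longrightarrow> xs ! index xs x = x"
  by (induction xs) auto

lemma inj_on_index: "inj_on (index xs) (set xs)"
  by (metis inj_onI nth_index)

lemma plackett_luce_pos: "(\<And>x. x \<in> set xs \<Longrightarrow> 0 < p x) \<Longrightarrow> 0 < plackett_luce p xs"
proof (induction xs)
  case (Cons x xs)
  have "0 \<le> sum_list (map p xs)"
    using Cons.prems by (intro sum_list_nonneg) (auto intro: less_imp_le)
  with Cons show ?case
    by (auto intro!: mult_pos_pos divide_pos_pos add_pos_nonneg)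
qed simp

lemma sum_permutations_of_set_Cons:
  assumes "finite A" "A \<noteq> {}"
  shows "sum f (permutations_of_set A) =
    (\<Sum>x\<in>A. \<Sum>xs\<in>permutations_of_set (A - {x}). f (x # xs))"
proof -
  have "sum f (permutations_of_set A) =
      (\<Sum>x\<in>A. sum f ((#) x ` permutations_of_set (A - {x})))"
    unfolding permutations_of_set_nonempty[OF assms(2)]
    using assms(1) by (intro sum.UNION_disjoint) auto
  then show ?thesis
    by (simp add: sum.reindex)
qed

lemma plackett_luce_Cons_permutation:
  assumes "finite A" "x \<in> A" "xs \<in> permutations_of_set (A - {x})"
  shows "plackett_luce p (x # xs) = p x / sum p A * plackett_luce p xs"
proof -
  have "sum_list (map p xs) = sum p (A - {x})"
    using permutations_of_setD[OF assms(3)] by (simp add: sum_list_distinct_conv_sum_set)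
  then show ?thesis
    using assms(1,2) by (simp add: sum.remove)
qed

lemma sum_plackett_luce_first_choice:
  assumes "finite A" "A \<noteq> {}"
  shows "(\<Sum>L\<in>permutations_of_set A. plackett_luce p L * g L) =
    (\<Sum>x\<in>A. p x / sum p A * (\<Sum>xs\<in>permutations_of_set (A - {x}). plackett_luce p xs * g (x # xs)))"
  unfolding sum_permutations_of_set_Cons[OF assms] sum_distrib_left
  using assms(1) by (intro sum.cong refl)
    (simp add: plackett_luce_Cons_permutation mult.assoc del: plackett_luce.simps(2))

lemma sum_plackett_luce_permutations:
  "finite A \<Longrightarrow> (\<And>x. x \<in> A \<Longrightarrow> 0 < p x) \<Longrightarrow> sum (plackett_luce p) (permutations_of_set A) = 1"
proof (induction A rule: finite_remove_induct)
  case (remove A)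
  have "sum (plackett_luce p) (permutations_of_set A) = (\<Sum>x\<in>A. p x / sum p A)"
    using sum_plackett_luce_first_choice[OF remove.hyps(1,2), of p "\<lambda>_. 1"] remove by simp
  also have "\<dots> = 1"
    using remove sum_pos[of A p] by (simp add: sum_divide_distrib[symmetric])
  finally show ?case .
qed simp

lemma sum_mult_two_point_correction:
  fixes p :: "'a \<Rightarrow> real"
  assumes "finite A" "i \<in> A" "j \<in> A" "i \<noteq> j"
  shows "(\<Sum>x\<in>A. p x * (c + (if x = i then 1 - c else 0) - (if x = j then c else 0)))
    = c * sum p A + (p i - c * (p i + p j))"
proof -
  have "(\<Sum>x\<in>A. p x * (c + (if x = i then 1 - c else 0) - (if x = j then c else 0)))
      = (\<Sum>x\<in>A. c * p x) + (\<Sum>x\<in>A. if x = i then p i * (1 - c) else 0)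
        - (\<Sum>x\<in>A. if x = j then p j * c else 0)"
    unfolding sum_subtractf[symmetric] sum.distrib[symmetric] using assms(4)
    by (intro sum.cong refl) (simp add: algebra_simps)
  also have "\<dots> = c * sum p A + (p i - c * (p i + p j))"
    using assms(1-3) by (simp add: sum_distrib_left sum.delta algebra_simps)
  finally show ?thesis .
qed

lemma plackett_luce_prefers:
  assumes "finite S" "\<And>x. x \<in> S \<Longrightarrow> 0 < p x" "i \<in> S" "j \<in> S" "i \<noteq> j"
  shows "(\<Sum>L\<in>permutations_of_set S. plackett_luce p L * (if index L i < index L j then 1 else 0))
    = p i / (p i + p j)"
  using assms
proof (induction S rule: finite_remove_induct)
  case (remove A)
  define c where "c = p i / (p i + p j)"
  \<comment> \<open>the probability that \<open>i\<close> precedes \<open>j\<close> once \<open>x\<close> has been drawn first\<close>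
  define h where "h x = c + (if x = i then 1 - c else 0) - (if x = j then c else 0)" for x
  have first_choice: "(\<Sum>xs\<in>permutations_of_set (A - {x}).
        plackett_luce p xs * (if index (x # xs) i < index (x # xs) j then 1 else 0)) = h x"
    if "x \<in> A" for x
  proof (cases "x = i \<or> x = j")
    case True
    then show ?thesis
      using remove.prems remove.hyps(1) that sum_plackett_luce_permutations[of "A - {x}" p]
      by (auto simp: h_def)
  next
    case False
    then show ?thesis
      using remove.IH[OF that] remove.prems that by (auto simp: h_def c_def)
  qed
  have "0 < p i" "0 < p j"
    using remove.prems by auto
  then have "c * (p i + p j) = p i"
    by (simp add: c_def)
  then have weighted_sum: "(\<Sum>x\<in>A. p x * h x) = c * sum p A"
    unfolding h_def using sum_mult_two_point_correction[OF remove.hyps(1) remove.prems(2-4)] by simp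
  have "0 < sum p A"
    using remove.hyps(1,2) remove.prems(1) by (simp add: sum_pos)
  have "(\<Sum>L\<in>permutations_of_set A. plackett_luce p L * (if index L i < index L j then 1 else 0))
      = (\<Sum>x\<in>A. p x / sum p A * h x)"
    unfolding sum_plackett_luce_first_choice[OF remove.hyps(1,2)]
    using first_choice by (intro sum.cong) auto
  also have "\<dots> = c"
    using weighted_sum \<open>0 < sum p A\<close> by (simp add: sum_divide_distrib[symmetric])
  finally show ?case
    by (simp add: c_def)
qed simp

definition order_vector :: "('n::{finite,linorder} \<Rightarrow> 'a::linorder) \<Rightarrow> real ^ ('n \<times> 'n)" where
  "order_vector \<sigma> = (\<chi> ij. case ij of (i, j) \<Rightarrow>
      if i < j then (if \<sigma> i < \<sigma> j then 1 else 0) else 0)"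

lemma order_vector_in_pair_coords: "order_vector \<sigma> \<in> pair_coords"
  by (simp add: order_vector_def pair_coords_def)

lemma ex_bij_with_same_order:
  fixes \<sigma> :: "'n::{finite,linorder} \<Rightarrow> 'a::linorder"
  assumes "inj \<sigma>"
  obtains \<tau> :: "'n \<Rightarrow> 'n" where "bij \<tau>" "\<And>i j. \<tau> i < \<tau> j \<longleftrightarrow> \<sigma> i < \<sigma> j"
proof -
  define e where "e = sorted_list_of_set (UNIV :: 'n set)"
  define rank where "rank i = card {l. \<sigma> l < \<sigma> i}" for i
  define \<tau> where "\<tau> i = e ! rank i" for i
  have rank_less_length: "rank i < length e" for i
  proof -
    have "{l. \<sigma> l < \<sigma> i} \<subset> UNIV"
      by auto
    then show ?thesis
      unfolding rank_def e_def by (simp add: psubset_card_mono)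
  qed
  have rank_mono: "\<sigma> i \<le> \<sigma> j \<Longrightarrow> rank i \<le> rank j" for i j
    unfolding rank_def by (intro card_mono) auto
  have rank_less_iff: "rank i < rank j \<longleftrightarrow> \<sigma> i < \<sigma> j" for i j
  proof
    show "\<sigma> i < \<sigma> j \<Longrightarrow> rank i < rank j"
      unfolding rank_def by (intro psubset_card_mono) auto
    show "rank i < rank j \<Longrightarrow> \<sigma> i < \<sigma> j"
      using rank_mono[of j i] by (meson not_le)
  qed
  have e_strict: "a < b \<Longrightarrow> b < length e \<Longrightarrow> e ! a < e ! b" for a b
    using sorted_wrt_nth_less[OF strict_sorted_list_of_set] unfolding e_def by blast
  have e_less_iff: "a < length e \<Longrightarrow> b < length e \<Longrightarrow> e ! a < e ! b \<longleftrightarrow> a < b" for a b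
    using e_strict[of a b] e_strict[of b a] by (metis less_asym linorder_neqE_nat less_irrefl)
  have \<tau>_less_iff: "\<tau> i < \<tau> j \<longleftrightarrow> \<sigma> i < \<sigma> j" for i j
    unfolding \<tau>_def using e_less_iff rank_less_length rank_less_iff by simp
  have "inj \<tau>"
  proof (rule injI)
    fix i j
    assume "\<tau> i = \<tau> j"
    then have "\<sigma> i = \<sigma> j"
      using \<tau>_less_iff[of i j] \<tau>_less_iff[of j i] by (metis less_irrefl linorder_neqE)
    then show "i = j"
      using assms by (rule injD[rotated])
  qed
  then have "bij \<tau>"
    by (simp add: bij_def finite_UNIV_inj_surj)
  then show thesis
    by (rule that[OF _ \<tau>_less_iff])
qed

lemma order_vector_in_ranking_vectors:
  fixes \<sigma> :: "'n::{finite,linorder} \<Rightarrow> 'a::linorder"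
  assumes "inj \<sigma>"
  shows "order_vector \<sigma> \<in> ranking_vectors"
proof -
  obtain \<tau> :: "'n \<Rightarrow> 'n" where "bij \<tau>" and \<tau>_less_iff: "\<And>i j. \<tau> i < \<tau> j \<longleftrightarrow> \<sigma> i < \<sigma> j"
    using ex_bij_with_same_order[OF assms] by blast
  have "order_vector \<sigma> = ranking_vector (inv \<tau>)"
    unfolding ranking_vector_def order_vector_def inv_inv_eq[OF \<open>bij \<tau>\<close>] \<tau>_less_iff
    by (rule refl)
  with \<open>bij \<tau>\<close> show ?thesis
    unfolding ranking_vectors_def by (blast intro: bij_imp_bij_inv)
qed

lemma order_vector_index_in_ranking_vectors:
  "L \<in> permutations_of_set UNIV \<Longrightarrow> order_vector (index L) \<in> ranking_vectors"
  using inj_on_index[of L] by (intro order_vector_in_ranking_vectors) (simp add: permutations_of_set_def)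

lemma affine_pair_coords: "affine pair_coords"
  by (rule subspace_imp_affine) (auto simp: subspace_def pair_coords_def)

lemma pair_coords_subset_span:
  fixes B :: "(real ^ ('n::{finite,linorder} \<times> 'n)) set"
  assumes "\<And>q. fst q < snd q \<Longrightarrow> axis q 1 \<in> span B"
  shows "pair_coords \<subseteq> span B"
proof
  fix z :: "real ^ ('n \<times> 'n)"
  assume z: "z \<in> pair_coords"
  have "z $ q *\<^sub>R axis q 1 \<in> span B" for q
  proof (cases "fst q < snd q")
    case True
    then show ?thesis
      using assms by (simp add: span_scale)
  next
    case False
    then have "z $ q = 0"
      using z by (cases q) (simp add: pair_coords_def)
    then show ?thesis
      by (simp add: span_zero)
  qed
  then have "(\<Sum>q\<in>UNIV. z $ q *\<^sub>R axis q 1) \<in> span B"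
    by (simp add: span_sum)
  then show "z \<in> span B"
    using basis_expansion[of z] by (simp add: scalar_mult_eq_scaleR)
qed

lemma affine_hull_eq_pair_coords:
  fixes S :: "(real ^ ('n::{finite,linorder} \<times> 'n)) set"
  assumes "S \<subseteq> pair_coords" "S \<noteq> {}"
    and differences: "\<And>i j. i < j \<Longrightarrow> \<exists>v\<in>S. \<exists>w\<in>S. v - w = axis (i, j) 1"
  shows "affine hull S = pair_coords"
proof
  show "affine hull S \<subseteq> pair_coords"
    using assms(1) affine_pair_coords by (rule hull_minimal)
  obtain a where a: "a \<in> S"
    using assms(2) by blast
  let ?D = "span ((\<lambda>x. - a + x) ` S)"
  have "pair_coords \<subseteq> ?D"
  proof (rule pair_coords_subset_span)
    fix q :: "'n \<times> 'n"
    assume "fst q < snd q"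
    then obtain v w where "v \<in> S" "w \<in> S" "v - w = axis q 1"
      using differences[of "fst q" "snd q"] by auto
    moreover have "(- a + v) - (- a + w) \<in> ?D"
      using \<open>v \<in> S\<close> \<open>w \<in> S\<close> by (intro span_diff span_base) auto
    ultimately show "axis q 1 \<in> ?D"
      by simp
  qed
  show "pair_coords \<subseteq> affine hull S"
  proof
    fix z :: "real ^ ('n \<times> 'n)"
    assume "z \<in> pair_coords"
    then have "z - a \<in> pair_coords"
      using assms(1) a by (auto simp: pair_coords_def)
    then have "a + (z - a) \<in> (\<lambda>x. a + x) ` ?D"
      using \<open>pair_coords \<subseteq> ?D\<close> by blast
    then show "z \<in> affine hull S"
      unfolding affine_hull_span_gen[OF hull_inc[OF a]] by simp
  qed
qed

lemma convex_combination_in_rel_interior_convex_hull: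
  fixes f :: "'i \<Rightarrow> 'a::euclidean_space"
  assumes "finite A" "\<And>i. i \<in> A \<Longrightarrow> 0 < w i" "sum w A = 1"
  shows "(\<Sum>i\<in>A. w i *\<^sub>R f i) \<in> rel_interior (convex hull (f ` A))"
proof -
  define u where "u y = sum w {i \<in> A. f i = y}" for y
  have "(\<Sum>i\<in>A. w i *\<^sub>R f i) = (\<Sum>y\<in>f ` A. \<Sum>i\<in>{i \<in> A. f i = y}. w i *\<^sub>R f i)"
    using assms(1) by (rule sum.image_gen)
  also have "\<dots> = (\<Sum>y\<in>f ` A. u y *\<^sub>R y)"
    unfolding u_def scaleR_sum_left by (intro sum.cong refl) simp
  finally have "(\<Sum>i\<in>A. w i *\<^sub>R f i) = (\<Sum>y\<in>f ` A. u y *\<^sub>R y)" .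
  moreover have "sum u (f ` A) = 1"
    unfolding u_def using assms(3) sum.image_gen[OF assms(1), of w f] by simp
  moreover have "\<forall>y\<in>f ` A. 0 < u y"
    unfolding u_def using assms(1,2) by (auto intro: sum_pos)
  ultimately have "(\<Sum>i\<in>A. w i *\<^sub>R f i) \<in> {y. \<exists>u. (\<forall>x\<in>f ` A. 0 < u x) \<and> sum u (f ` A) = 1
      \<and> (\<Sum>x\<in>f ` A. u x *\<^sub>R x) = y}"
    by auto
  then show ?thesis
    using explicit_subset_rel_interior_convex_hull_minimal[OF finite_imageI[OF assms(1)]] by blast
qed

lemma rel_interior_convex_hull_subset_Co_HR:
  fixes S :: "(real ^ ('n::{finite,linorder} \<times> 'n)) set"
  assumes "S \<subseteq> ranking_vectors" "affine hull S = pair_coords"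
  shows "rel_interior (convex hull S) \<subseteq> Co_HR"
proof -
  let ?R = "ranking_vectors :: (real ^ ('n \<times> 'n)) set"
  have "?R \<subseteq> pair_coords"
    unfolding ranking_vectors_def ranking_vector_def pair_coords_def by auto
  then have "affine hull ?R \<subseteq> pair_coords"
    using affine_pair_coords by (rule hull_minimal)
  moreover have "pair_coords \<subseteq> affine hull ?R"
    using hull_mono[OF assms(1), of affine] assms(2) by simp
  ultimately have hull_eq: "affine hull ?R = pair_coords"
    by (rule subset_antisym)
  have "rel_interior (convex hull S) \<subseteq> rel_interior (convex hull ?R)"
    using assms hull_eq by (intro rel_interior_mono hull_mono) (simp_all add: affine_hull_convex_hull)
  also have "\<dots> = Co_HR"
    unfolding Co_HR_def rel_interior_def interior_of_def affine_hull_convex_hull hull_eq ..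
  finally show ?thesis .
qed

lemma order_vector_swap_top:
  fixes i j :: "'n::{finite,linorder}"
  assumes "i < j"
  shows "order_vector (index (i # j # R)) - order_vector (index (j # i # R)) = axis (i, j) 1"
  unfolding vec_eq_iff
proof
  fix ab :: "'n \<times> 'n"
  show "(order_vector (index (i # j # R)) - order_vector (index (j # i # R))) $ ab = axis (i, j) 1 $ ab"
    using assms by (cases ab) (auto simp: order_vector_def axis_def)
qed

lemma affine_hull_permutation_order_vectors:
  "affine hull ((\<lambda>L. order_vector (index L)) ` permutations_of_set (UNIV :: 'n::{finite,linorder} set))
    = pair_coords" (is "affine hull ?V = _")
proof (rule affine_hull_eq_pair_coords)
  show "?V \<subseteq> pair_coords"
    by (simp add: image_subset_iff order_vector_in_pair_coords)
  show "?V \<noteq> {}"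
    by simp
  fix i j :: 'n
  assume "i < j"
  obtain R where R: "set R = UNIV - {i, j}" "distinct R"
    using finite_distinct_list[of "UNIV - {i, j}"] by auto
  have "i # j # R \<in> permutations_of_set UNIV" "j # i # R \<in> permutations_of_set UNIV"
    using R \<open>i < j\<close> by (auto simp: permutations_of_set_def)
  then have "order_vector (index (i # j # R)) \<in> ?V" "order_vector (index (j # i # R)) \<in> ?V"
    by auto
  then show "\<exists>v\<in>?V. \<exists>w\<in>?V. v - w = axis (i, j) 1"
    using order_vector_swap_top[OF \<open>i < j\<close>] by blast
qed

definition plackett_luce_mixture :: "(nat \<Rightarrow> real) \<Rightarrow> (nat \<Rightarrow> 'a \<Rightarrow> real) \<Rightarrow> nat \<Rightarrow> 'a list \<Rightarrow> real"
  where "plackett_luce_mixture d p k L = (\<Sum>u=1..k. d u * plackett_luce (p u) L)"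

lemma plackett_luce_mixture_pos:
  assumes "\<And>u x. u \<in> {1..k} \<Longrightarrow> 0 < p u x" "\<And>u. u \<in> {1..k} \<Longrightarrow> 0 \<le> d u"
    and "(\<Sum>u=1..k. d u) = 1"
  shows "0 < plackett_luce_mixture d p k L"
proof -
  have "\<exists>u\<in>{1..k}. d u \<noteq> 0"
    using assms(3) by (metis sum.neutral zero_neq_one)
  then obtain u0 where u0: "u0 \<in> {1..k}" "0 < d u0"
    using assms(2) by (auto simp: less_le)
  have "0 < plackett_luce (p u) L" if "u \<in> {1..k}" for u
    by (intro plackett_luce_pos assms(1)[OF that])
  then show ?thesis
    unfolding plackett_luce_mixture_def using u0 assms(2)
    by (intro sum_pos2[OF finite_atLeastAtMost u0(1)]) (simp_all add: less_imp_le)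
qed

lemma sum_plackett_luce_mixture:
  assumes "finite A" "\<And>u x. u \<in> {1..k} \<Longrightarrow> 0 < p u x"
  shows "sum (plackett_luce_mixture d p k) (permutations_of_set A) = (\<Sum>u=1..k. d u)"
proof -
  have "sum (plackett_luce_mixture d p k) (permutations_of_set A)
      = (\<Sum>u=1..k. d u * sum (plackett_luce (p u)) (permutations_of_set A))"
    unfolding plackett_luce_mixture_def sum_distrib_left by (rule sum.swap)
  also have "\<dots> = (\<Sum>u=1..k. d u)"
    using assms by (simp add: sum_plackett_luce_permutations)
  finally show ?thesis .
qed

lemma expert_vector_eq_plackett_luce_mixture:
  fixes p :: "nat \<Rightarrow> 'n::{finite,linorder} \<Rightarrow> real"
  assumes "\<And>u i. u \<in> {1..k} \<Longrightarrow> 0 < p u i"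
  shows "expert_vector d p k
    = (\<Sum>L\<in>permutations_of_set UNIV. plackett_luce_mixture d p k L *\<^sub>R order_vector (index L))"
  unfolding vec_eq_iff
proof
  fix ij :: "'n \<times> 'n"
  obtain i j where ij: "ij = (i, j)"
    by (cases ij)
  let ?A = "permutations_of_set (UNIV :: 'n set)"
  let ?before = "\<lambda>L. if index L i < index L j then 1 else 0 :: real"
  show "expert_vector d p k $ ij
    = (\<Sum>L\<in>?A. plackett_luce_mixture d p k L *\<^sub>R order_vector (index L)) $ ij"
  proof (cases "i < j")
    case True
    have prefers: "(\<Sum>L\<in>?A. plackett_luce (p u) L * ?before L) = p u i / (p u i + p u j)"
      if "u \<in> {1..k}" for u
      using assms[OF that] True by (intro plackett_luce_prefers) auto
    have "expert_vector d p k $ ij = (\<Sum>u=1..k. d u * (p u i / (p u i + p u j)))"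
      using True by (simp add: ij expert_vector_def f_d_def)
    also have "\<dots> = (\<Sum>u=1..k. d u * (\<Sum>L\<in>?A. plackett_luce (p u) L * ?before L))"
      using prefers by simp
    also have "\<dots> = (\<Sum>L\<in>?A. plackett_luce_mixture d p k L * ?before L)"
      unfolding plackett_luce_mixture_def sum_distrib_left sum_distrib_right mult.assoc
      by (rule sum.swap)
    also have "\<dots> = (\<Sum>L\<in>?A. plackett_luce_mixture d p k L *\<^sub>R order_vector (index L)) $ ij"
      using True by (simp add: ij order_vector_def)
    finally show ?thesis .
  qed (simp add: ij expert_vector_def order_vector_def)
qed

theorem lemma11:
  fixes p :: "nat \<Rightarrow> 'n::{finite,linorder} \<Rightarrow> real"
    and d :: "nat \<Rightarrow> real"
    and k :: nat
  assumes p_range: "\<forall>u\<in>{1..k}. \<forall>i. 0 < p u i \<and> p u i < 1"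
    and p_sum: "\<forall>u\<in>{1..k}. (\<Sum>i\<in>UNIV. p u i) = 1"
    and d_nonneg: "\<forall>u\<in>{1..k}. 0 \<le> d u"
    and d_sum: "(\<Sum>u=1..k. d u) = 1"
  shows "expert_vector d p k \<in> Co_HR"
proof -
  let ?A = "permutations_of_set (UNIV :: 'n set)"
  have p_pos: "\<And>u i. u \<in> {1..k} \<Longrightarrow> 0 < p u i"
    using p_range by blast
  have weights_sum: "sum (plackett_luce_mixture d p k) ?A = 1"
    using d_sum by (subst sum_plackett_luce_mixture) (simp_all add: p_pos)
  have "expert_vector d p k = (\<Sum>L\<in>?A. plackett_luce_mixture d p k L *\<^sub>R order_vector (index L))"
    using p_pos by (rule expert_vector_eq_plackett_luce_mixture)
  also have "\<dots> \<in> rel_interior (convex hull ((\<lambda>L. order_vector (index L)) ` ?A))"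
    using p_pos d_nonneg d_sum weights_sum
    by (intro convex_combination_in_rel_interior_convex_hull plackett_luce_mixture_pos) simp_all
  also have "\<dots> \<subseteq> Co_HR"
    by (rule rel_interior_convex_hull_subset_Co_HR[OF _ affine_hull_permutation_order_vectors])
      (auto intro: order_vector_index_in_ranking_vectors)
  finally show ?thesis .
qed

end
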